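(* Let $\mathcal G$ be a temporal graph with $n$ vertices and $m$ contacts, considered with strict journeys. Then there exists a happy temporal graph $\mathcal H$ with $n+2m$ vertices and $4m$ edges, together with an (injective) mapping $\sigma:V_{\mathcal G}\to V_{\mathcal H}$, such that for all $u,v\in V_{\mathcal G}$, $(u,v)$ is an arc of the strict reachability graph $\mathcal C(\mathcal G)$ if and only if $(\sigma(u),\sigma(v))$ is an arc of $\mathcal C(\mathcal H)$.
   Context: A temporal graph is a triple $\mathcal G=(V,E,\lambda)$ where $V$ is a finite vertex set, $E$ is a set of undirected edges on $V$, and $\lambda:E\to 2^{\mathbb N}\setminus\{\emptyset\}$ assigns to each edge a nonempty set of presence times. The footprint of $\mathcal G$ is the static graph $(V,E)$. A contact is a pair $(e,t)$ with $e\in E$ and $t\in\lambda(e)$. A journey from $u$ to $v$ is a sequence of contacts $(e_1,t_1),\dots,(e_k,t_k)$, $k\ge 1$, such that $e_1,\dots,e_k$ form a path from $u$ to $v$ in the footprint and $t_1\le t_2\le\dots\le t_k$ (a non-strict journey); it is strict if $t_1<t_2<\dots<t_k$. $\mathcal G$ is proper if $\lambda(e)\cap\lambda(e')=\emptyset$ for any two distinct edges $e,e'$ sharing an endpoint (in a proper graph every journey is strict); simple if $|\lambda(e)|=1$ for every edge $e$; happy if it is both proper and simple. The reachability graph $\mathcal C(\mathcal G)$ (with respect to a chosen journey notion) is the directed graph on $V$ having an arc $(u,v)$, $u\neq v$, if and only if there is a journey from $u$ to $v$. *)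

theory Defs
  imports Main
begin

definition temporal_graph :: "'v set \<Rightarrow> 'v set set \<Rightarrow> ('v set \<Rightarrow> nat set) \<Rightarrow> bool" where
  "temporal_graph V E lam \<longleftrightarrow> finite V
     \<and> (\<forall>e\<in>E. \<exists>x y. x \<noteq> y \<and> x \<in> V \<and> y \<in> V \<and> e = {x, y})
     \<and> (\<forall>e\<in>E. lam e \<noteq> {})"

definition contacts :: "'v set set \<Rightarrow> ('v set \<Rightarrow> nat set) \<Rightarrow> ('v set \<times> nat) set" where
  "contacts E lam = {(e, t). e \<in> E \<and> t \<in> lam e}"

definition proper :: "'v set set \<Rightarrow> ('v set \<Rightarrow> nat set) \<Rightarrow> bool" where
  "proper E lam \<longleftrightarrow> (\<forall>e\<in>E. \<forall>e'\<in>E. e \<noteq> e' \<and> e \<inter> e' \<noteq> {} \<longrightarrow> lam e \<inter> lam e' = {})"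

definition simple :: "'v set set \<Rightarrow> ('v set \<Rightarrow> nat set) \<Rightarrow> bool" where
  "simple E lam \<longleftrightarrow> (\<forall>e\<in>E. card (lam e) = 1)"

definition happy :: "'v set set \<Rightarrow> ('v set \<Rightarrow> nat set) \<Rightarrow> bool" where
  "happy E lam \<longleftrightarrow> proper E lam \<and> simple E lam"

definition strict_journey :: "'v set set \<Rightarrow> ('v set \<Rightarrow> nat set) \<Rightarrow> 'v \<Rightarrow> 'v \<Rightarrow> 'v list \<Rightarrow> nat list \<Rightarrow> bool" where
  "strict_journey E lam u v vs ts \<longleftrightarrow>
     length ts \<ge> 1 \<and> length vs = length ts + 1 \<and> distinct vs
     \<and> hd vs = u \<and> last vs = v
     \<and> (\<forall>i < length ts. {vs ! i, vs ! Suc i} \<in> E \<and> ts ! i \<in> lam {vs ! i, vs ! Suc i})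
     \<and> sorted_wrt (<) ts"

definition reach_arc :: "'v set \<Rightarrow> 'v set set \<Rightarrow> ('v set \<Rightarrow> nat set) \<Rightarrow> 'v \<Rightarrow> 'v \<Rightarrow> bool" where
  "reach_arc V E lam u v \<longleftrightarrow> u \<in> V \<and> v \<in> V \<and> u \<noteq> v \<and> (\<exists>vs ts. strict_journey E lam u v vs ts)"

end

theory Submission
  imports Defs
begin

text \<open>Let M be the number of directed contacts (u, v, t) of G, indexed by i < M. Each of them
  becomes a fresh vertex n + i joined to \<sigma> u at time 2Mt + i and to \<sigma> v at time 2Mt + M + i.
  These labels are pairwise distinct (already modulo 2M), so H is happy; and the scaling by 2M
  makes every gadget of time t precede every gadget of a later time, so strict journeys of G
  become strict journeys of H. Conversely, a strict journey of H can only cross a gadget from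
  u to v, because its exit edge is later than its entry edge, and consecutive gadgets on it
  have strictly increasing original times. Both directions are argued for strict walks, which
  may repeat vertices: cutting out cycles turns a strict walk into a strict journey that ends
  no later.\<close>

inductive strict_walk :: "'v set set \<Rightarrow> ('v set \<Rightarrow> nat set) \<Rightarrow> 'v \<Rightarrow> 'v \<Rightarrow> nat \<Rightarrow> bool"
  for E lam where
  walk_edge: "{u, v} \<in> E \<Longrightarrow> t \<in> lam {u, v} \<Longrightarrow> strict_walk E lam u v t"
| walk_step: "strict_walk E lam u w b \<Longrightarrow> {w, v} \<in> E \<Longrightarrow> t \<in> lam {w, v} \<Longrightarrow> b < t
    \<Longrightarrow> strict_walk E lam u v t"

lemma sorted_le_last: "sorted xs \<Longrightarrow> x \<in> set xs \<Longrightarrow> x \<le> last xs"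
  by (induction xs) (auto simp: last_in_set)

lemma strict_journey_prefix_walk:
  assumes J: "strict_journey E lam u v vs ts" and k: "k < length ts"
  shows "strict_walk E lam u (vs ! Suc k) (ts ! k)"
  using k
proof (induction k)
  case 0
  from J have "vs ! 0 = u" by (cases vs) (auto simp: strict_journey_def)
  with 0 J show ?case by (auto simp: strict_journey_def intro: walk_edge)
next
  case (Suc k)
  have "ts ! k < ts ! Suc k" using J Suc.prems by (auto simp: strict_journey_def sorted_wrt_iff_nth_less)
  with Suc J show ?case by (auto simp: strict_journey_def intro: walk_step)
qed

lemma strict_journey_imp_walk:
  assumes J: "strict_journey E lam u v vs ts"
  shows "strict_walk E lam u v (last ts)"
proof -
  from J have len: "length ts \<ge> 1" "length vs = length ts + 1" and "last vs = v"
    by (auto simp: strict_journey_def)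
  then have "vs ! Suc (length ts - 1) = v" "ts ! (length ts - 1) = last ts"
    by (auto simp: last_conv_nth simp flip: length_greater_0_conv)
  with strict_journey_prefix_walk[OF J, of "length ts - 1"] len show ?thesis by simp
qed

lemma strict_journey_snoc:
  assumes J: "strict_journey E lam u w vs ts" and "v \<notin> set vs"
    and "{w, v} \<in> E" "t \<in> lam {w, v}" "last ts < t"
  shows "strict_journey E lam u v (vs @ [v]) (ts @ [t])"
proof -
  from J have len: "length ts \<ge> 1" "length vs = length ts + 1" and "last vs = w"
    and S: "sorted_wrt (<) ts" by (auto simp: strict_journey_def)
  then have w: "vs ! length ts = w" by (auto simp: last_conv_nth simp flip: length_greater_0_conv)
  have "x < t" if "x \<in> set ts" for x
    using sorted_le_last[OF strict_sorted_imp_sorted[OF S] that] \<open>last ts < t\<close> by simp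
  moreover have "vs \<noteq> []" using len by auto
  ultimately show ?thesis using assms len w
    by (auto simp: strict_journey_def nth_append sorted_wrt_append less_Suc_eq)
qed

lemma strict_journey_take:
  assumes J: "strict_journey E lam u w vs ts" and j: "0 < j" "j < length vs"
  shows "strict_journey E lam u (vs ! j) (take (Suc j) vs) (take j ts)"
proof -
  from J j have "j \<le> length ts" "vs \<noteq> []" by (auto simp: strict_journey_def)
  moreover have "last (take (Suc j) vs) = vs ! j" using j by (simp add: take_Suc_conv_app_nth)
  ultimately show ?thesis using J j by (auto simp: strict_journey_def min_def)
qed

lemma strict_walk_imp_journey:
  assumes "strict_walk E lam u v b" "u \<noteq> v"
  shows "\<exists>vs ts. strict_journey E lam u v vs ts \<and> last ts \<le> b"
  using assms
proof (induction rule: strict_walk.induct)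
  case (walk_edge u v t)
  then show ?case by (intro exI[of _ "[u, v]"] exI[of _ "[t]"]) (auto simp: strict_journey_def)
next
  case (walk_step u w b v t)
  show ?case
  proof (cases "u = w")
    case True
    with walk_step show ?thesis
      by (intro exI[of _ "[u, v]"] exI[of _ "[t]"]) (auto simp: strict_journey_def)
  next
    case False
    with walk_step obtain vs ts where J: "strict_journey E lam u w vs ts" and "last ts \<le> b"
      by blast
    with walk_step.hyps have "last ts < t" by simp
    show ?thesis
    proof (cases "v \<in> set vs")
      case False
      with strict_journey_snoc[OF J _ walk_step.hyps(2,3) \<open>last ts < t\<close>] show ?thesis
        by fastforce
    next
      case True
      then obtain j where j: "j < length vs" "vs ! j = v" by (auto simp: in_set_conv_nth)
      from J have "vs ! 0 = u" "length vs = length ts + 1" "sorted_wrt (<) ts"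
        by (cases vs; auto simp: strict_journey_def)+
      with j walk_step.prems have "0 < j" "take j ts \<noteq> []" by (auto intro!: gr0I)
      then have "last (take j ts) \<le> last ts"
        using sorted_le_last[OF strict_sorted_imp_sorted] \<open>sorted_wrt (<) ts\<close>
        by (meson in_set_takeD last_in_set)
      with strict_journey_take[OF J \<open>0 < j\<close> j(1)] j \<open>last ts < t\<close> show ?thesis
        by (intro exI conjI) auto
    qed
  qed
qed

lemma reach_arc_iff_strict_walk:
  "reach_arc V E lam u v \<longleftrightarrow> u \<in> V \<and> v \<in> V \<and> u \<noteq> v \<and> (\<exists>b. strict_walk E lam u v b)"
  unfolding reach_arc_def using strict_journey_imp_walk strict_walk_imp_journey by metis

definition directed_contacts :: "'v set set \<Rightarrow> ('v set \<Rightarrow> nat set) \<Rightarrow> ('v \<times> 'v \<times> nat) set" where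
  "directed_contacts E lam = {(u, v, t). {u, v} \<in> E \<and> t \<in> lam {u, v}}"

lemma directed_contacts_UN_orientations:
  "directed_contacts E lam = (\<Union>c\<in>contacts E lam. {(u, v, t). ({u, v}, t) = c})"
  by (auto simp: directed_contacts_def contacts_def)

lemma card_directed_contacts:
  assumes G: "temporal_graph V E lam" and fin: "finite (contacts E lam)"
  shows "finite (directed_contacts E lam)"
    and "card (directed_contacts E lam) = 2 * card (contacts E lam)"
proof -
  have two: "finite {(u, v, t). ({u, v}, t) = c} \<and> card {(u, v, t). ({u, v}, t) = c} = 2"
    if "c \<in> contacts E lam" for c
  proof -
    from that G obtain x y s where "c = ({x, y}, s)" "x \<noteq> y"
      by (force simp: contacts_def temporal_graph_def)
    moreover from this have "{(u, v, t). ({u, v}, t) = c} = {(x, y, s), (y, x, s)}"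
      by (auto simp: doubleton_eq_iff)
    ultimately show ?thesis by simp
  qed
  show "finite (directed_contacts E lam)"
    using fin two by (simp add: directed_contacts_UN_orientations)
  have "card (directed_contacts E lam) = (\<Sum>c\<in>contacts E lam. card {(u, v, t). ({u, v}, t) = c})"
    unfolding directed_contacts_UN_orientations using fin two by (intro card_UN_disjoint) auto
  then show "card (directed_contacts E lam) = 2 * card (contacts E lam)"
    using two by simp
qed

locale happy_encoding =
  fixes V :: "'a set" and E :: "'a set set" and lam :: "'a set \<Rightarrow> nat set"
    and \<sigma> :: "'a \<Rightarrow> nat" and g :: "nat \<Rightarrow> 'a \<times> 'a \<times> nat" and n M :: nat
  assumes temporal: "temporal_graph V E lam"
    and \<sigma>_bij: "bij_betw \<sigma> V {0..<n}"
    and g_bij: "bij_betw g {0..<M} (directed_contacts E lam)"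
begin

definition src :: "nat \<Rightarrow> 'a" where "src i = fst (g i)"
definition dst :: "nat \<Rightarrow> 'a" where "dst i = fst (snd (g i))"
definition tm :: "nat \<Rightarrow> nat" where "tm i = snd (snd (g i))"

definition gadget_edge :: "nat \<Rightarrow> bool \<Rightarrow> nat set" where
  "gadget_edge i out = (if out then {n + i, \<sigma> (dst i)} else {\<sigma> (src i), n + i})"

definition gadget_time :: "nat \<Rightarrow> bool \<Rightarrow> nat" where
  "gadget_time i out = 2 * M * tm i + (if out then M else 0) + i"

definition VH :: "nat set" where "VH = {0..<n + M}"
definition EH :: "nat set set" where "EH = {gadget_edge i out | i out. i < M}"
definition lamH :: "nat set \<Rightarrow> nat set" where
  "lamH e = {gadget_time i out | i out. i < M \<and> e = gadget_edge i out}"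

lemma contact_of_index: "i < M \<Longrightarrow> {src i, dst i} \<in> E \<and> tm i \<in> lam {src i, dst i}"
  using bij_betw_apply[OF g_bij, of i]
  by (auto simp: src_def dst_def tm_def directed_contacts_def split: prod.splits)

lemma index_of_contact:
  assumes "{u, v} \<in> E" "t \<in> lam {u, v}"
  obtains i where "i < M" "src i = u" "dst i = v" "tm i = t"
proof -
  from assms g_bij have "(u, v, t) \<in> g ` {0..<M}"
    by (auto simp: bij_betw_def directed_contacts_def)
  then obtain i where "i < M" "g i = (u, v, t)" by auto
  then show ?thesis using that by (simp add: src_def dst_def tm_def)
qed

lemma edge_ends: "{x, y} \<in> E \<Longrightarrow> x \<in> V \<and> y \<in> V \<and> x \<noteq> y"
  using temporal unfolding temporal_graph_def by (metis doubleton_eq_iff insert_absorb2)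

lemma src_dst: "i < M \<Longrightarrow> src i \<in> V \<and> dst i \<in> V \<and> src i \<noteq> dst i"
  using contact_of_index edge_ends by blast

lemma \<sigma>_less: "v \<in> V \<Longrightarrow> \<sigma> v < n"
  using \<sigma>_bij by (auto simp: bij_betw_def)

lemma \<sigma>_eq_iff: "u \<in> V \<Longrightarrow> v \<in> V \<Longrightarrow> \<sigma> u = \<sigma> v \<longleftrightarrow> u = v"
  using \<sigma>_bij by (auto simp: bij_betw_def inj_on_def)

lemma gadget_edge_inj:
  assumes "i < M" "j < M" "gadget_edge i out = gadget_edge j out'"
  shows "i = j \<and> out = out'"
proof -
  have ends: "\<sigma> (src k) < n" "\<sigma> (dst k) < n" "\<sigma> (src k) \<noteq> \<sigma> (dst k)" if "k < M" for k
    using src_dst[OF that] \<sigma>_less \<sigma>_eq_iff by auto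
  from assms have "n + j \<in> gadget_edge i out" by (auto simp: gadget_edge_def)
  with ends[OF \<open>i < M\<close>] have "i = j" by (auto simp: gadget_edge_def split: if_splits)
  with assms ends[OF \<open>i < M\<close>] show ?thesis
    by (cases out; cases out') (auto simp: gadget_edge_def doubleton_eq_iff)
qed

lemma gadget_time_mod: "i < M \<Longrightarrow> gadget_time i out mod (2 * M) = i + (if out then M else 0)"
  by (simp add: gadget_time_def add.assoc)

lemma gadget_time_inj:
  "i < M \<Longrightarrow> j < M \<Longrightarrow> gadget_time i out = gadget_time j out' \<Longrightarrow> i = j \<and> out = out'"
proof -
  assume "i < M" "j < M" "gadget_time i out = gadget_time j out'"
  then have "i + (if out then M else 0) = j + (if out' then M else 0)"
    using gadget_time_mod by metis
  with \<open>i < M\<close> \<open>j < M\<close> show "i = j \<and> out = out'" by (cases out; cases out') auto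
qed

lemma lamH_gadget_edge:
  assumes "i < M"
  shows "lamH (gadget_edge i out) = {gadget_time i out}"
  unfolding lamH_def using assms gadget_edge_inj[OF assms] by blast

lemma lamH_cases:
  assumes "t \<in> lamH e"
  obtains i out where "i < M" "e = gadget_edge i out" "t = gadget_time i out"
  using assms that unfolding lamH_def by blast

lemma gadget_edge_in_EH: "i < M \<Longrightarrow> gadget_edge i out \<in> EH"
  unfolding EH_def by blast

lemma temporal_graph_H: "temporal_graph VH EH lamH"
  unfolding temporal_graph_def
proof (intro conjI ballI)
  show "finite VH" by (simp add: VH_def)
next
  fix e assume "e \<in> EH"
  then obtain i out where i: "i < M" and e: "e = gadget_edge i out" by (auto simp: EH_def)
  then have ends: "\<sigma> (src i) < n" "\<sigma> (dst i) < n" using src_dst \<sigma>_less by auto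
  show "\<exists>x y. x \<noteq> y \<and> x \<in> VH \<and> y \<in> VH \<and> e = {x, y}"
  proof (cases out)
    case True
    with i e ends show ?thesis unfolding gadget_edge_def VH_def
      by (intro exI[of _ "n + i"] exI[of _ "\<sigma> (dst i)"]) simp
  next
    case False
    with i e ends show ?thesis unfolding gadget_edge_def VH_def
      by (intro exI[of _ "\<sigma> (src i)"] exI[of _ "n + i"]) simp
  qed
  show "lamH e \<noteq> {}" using i e lamH_gadget_edge by simp
qed

lemma happy_H: "happy EH lamH"
  unfolding happy_def proper_def simple_def
proof (intro conjI ballI impI)
  fix e e' assume "e \<in> EH" "e' \<in> EH" and "e \<noteq> e' \<and> e \<inter> e' \<noteq> {}"
  then obtain i out j out' where "i < M" "e = gadget_edge i out" "j < M" "e' = gadget_edge j out'"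
    unfolding EH_def by blast
  with \<open>e \<noteq> e' \<and> e \<inter> e' \<noteq> {}\<close> have "gadget_time i out \<noteq> gadget_time j out'"
    using gadget_time_inj by blast
  with \<open>i < M\<close> \<open>j < M\<close> show "lamH e \<inter> lamH e' = {}"
    unfolding \<open>e = _\<close> \<open>e' = _\<close> by (simp add: lamH_gadget_edge)
next
  fix e assume "e \<in> EH"
  then show "card (lamH e) = 1" by (auto simp: EH_def lamH_gadget_edge)
qed

lemma card_EH: "card EH = 2 * M"
proof -
  have "EH = (\<lambda>(i, out). gadget_edge i out) ` ({0..<M} \<times> UNIV)" by (auto simp: EH_def)
  moreover have "inj_on (\<lambda>(i, out). gadget_edge i out) ({0..<M} \<times> UNIV)"
    using gadget_edge_inj by (auto simp: inj_on_def)
  ultimately show ?thesis by (simp add: card_image card_cartesian_product)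
qed

lemma card_VH: "card VH = n + M"
  by (simp add: VH_def)

lemma walk_enter_gadget:
  assumes "i < M" "strict_walk EH lamH x (\<sigma> (src i)) b" "b < gadget_time i False"
  shows "strict_walk EH lamH x (n + i) (gadget_time i False)"
  using walk_step[OF assms(2) _ _ assms(3)] gadget_edge_in_EH[OF assms(1), of False]
    lamH_gadget_edge[OF assms(1), of False]
  by (simp add: gadget_edge_def)

lemma walk_leave_gadget:
  assumes "i < M" "strict_walk EH lamH x (n + i) (gadget_time i False)"
  shows "strict_walk EH lamH x (\<sigma> (dst i)) (gadget_time i True)"
  using walk_step[OF assms(2), of "\<sigma> (dst i)" "gadget_time i True"] assms(1)
    gadget_edge_in_EH[OF assms(1), of True] lamH_gadget_edge[OF assms(1), of True]
  by (simp add: gadget_edge_def gadget_time_def)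

lemma strict_walk_encode:
  "strict_walk E lam u v t \<Longrightarrow> \<exists>b. strict_walk EH lamH (\<sigma> u) (\<sigma> v) b \<and> b < 2 * M * (t + 1)"
proof (induction rule: strict_walk.induct)
  case (walk_edge u v t)
  then obtain i where i: "i < M" "src i = u" "dst i = v" "tm i = t" by (rule index_of_contact)
  have "strict_walk EH lamH (\<sigma> u) (n + i) (gadget_time i False)"
    using gadget_edge_in_EH[OF i(1), of False] lamH_gadget_edge[OF i(1), of False] i
    by (intro strict_walk.walk_edge) (simp_all add: gadget_edge_def)
  with i have "strict_walk EH lamH (\<sigma> u) (\<sigma> v) (gadget_time i True)"
    using walk_leave_gadget by blast
  moreover have "gadget_time i True < 2 * M * (t + 1)" using i by (simp add: gadget_time_def)
  ultimately show ?case by blast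
next
  case (walk_step u w b v t)
  then obtain i where i: "i < M" "src i = w" "dst i = v" "tm i = t" by (meson index_of_contact)
  from walk_step.IH obtain b' where b': "strict_walk EH lamH (\<sigma> u) (\<sigma> w) b'" "b' < 2 * M * (b + 1)"
    by blast
  have "2 * M * (b + 1) \<le> 2 * M * t" using walk_step.hyps(4) by (intro mult_le_mono2) simp
  with b' i have "b' < gadget_time i False" by (simp add: gadget_time_def)
  with walk_enter_gadget walk_leave_gadget b' i
  have "strict_walk EH lamH (\<sigma> u) (\<sigma> v) (gadget_time i True)" by blast
  moreover have "gadget_time i True < 2 * M * (t + 1)" using i by (simp add: gadget_time_def)
  ultimately show ?case by blast
qed

text \<open>Invariant of a strict walk of H that starts at \<sigma> u and ends at y at time b. A walk that
  reaches a gadget vertex at its exit time has come from the destination side and is stuck.\<close>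

definition walk_decoding :: "'a \<Rightarrow> nat \<Rightarrow> nat \<Rightarrow> bool" where
  "walk_decoding u y b \<longleftrightarrow>
     (\<forall>v\<in>V. y = \<sigma> v \<longrightarrow> v = u \<or> (\<exists>b0. strict_walk E lam u v b0 \<and> 2 * M * b0 + M \<le> b))
   \<and> (\<forall>i<M. y = n + i \<longrightarrow> b = gadget_time i True \<or>
        b = gadget_time i False \<and> (src i = u \<or> (\<exists>b0. strict_walk E lam u (src i) b0 \<and> b0 < tm i)))"

lemma \<sigma>_neq_gadget_vertex: "v \<in> V \<Longrightarrow> \<sigma> v \<noteq> n + i \<and> n + i \<noteq> \<sigma> v"
  using \<sigma>_less by fastforce

lemma walk_decoding_vertex:
  "v \<in> V \<Longrightarrow> walk_decoding u (\<sigma> v) b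
     \<longleftrightarrow> v = u \<or> (\<exists>b0. strict_walk E lam u v b0 \<and> 2 * M * b0 + M \<le> b)"
  using \<sigma>_neq_gadget_vertex \<sigma>_eq_iff by (auto simp: walk_decoding_def)

lemma walk_decoding_gadget:
  "i < M \<Longrightarrow> walk_decoding u (n + i) b
     \<longleftrightarrow> b = gadget_time i True \<or>
        b = gadget_time i False \<and> (src i = u \<or> (\<exists>b0. strict_walk E lam u (src i) b0 \<and> b0 < tm i))"
  using \<sigma>_neq_gadget_vertex by (auto simp: walk_decoding_def)

lemma gadget_edge_cases:
  assumes "t \<in> lamH {w, y}"
  obtains i where "i < M" "w = \<sigma> (src i)" "y = n + i" "t = gadget_time i False"
    | i where "i < M" "w = n + i" "y = \<sigma> (src i)" "t = gadget_time i False"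
    | i where "i < M" "w = n + i" "y = \<sigma> (dst i)" "t = gadget_time i True"
    | i where "i < M" "w = \<sigma> (dst i)" "y = n + i" "t = gadget_time i True"
proof -
  from assms obtain i out where "i < M" "{w, y} = gadget_edge i out" "t = gadget_time i out"
    by (rule lamH_cases)
  with that show ?thesis by (cases out) (auto simp: gadget_edge_def doubleton_eq_iff)
qed

lemma walk_decoding_start:
  assumes "u \<in> V" "t \<in> lamH {\<sigma> u, y}"
  shows "walk_decoding u y t"
  using assms(2)
proof (cases rule: gadget_edge_cases)
  case (1 i)
  with assms(1) src_dst show ?thesis by (simp add: walk_decoding_gadget \<sigma>_eq_iff)
next
  case (4 i)
  then show ?thesis by (simp add: walk_decoding_gadget)
qed (use assms(1) \<sigma>_neq_gadget_vertex in blast)+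

lemma walk_decoding_step:
  assumes dec: "walk_decoding u w b" and t: "t \<in> lamH {w, y}" "b < t"
  shows "walk_decoding u y t"
  using t(1)
proof (cases rule: gadget_edge_cases)
  case (1 i)
  with src_dst dec have "src i = u \<or> (\<exists>b0. strict_walk E lam u (src i) b0 \<and> 2 * M * b0 + M \<le> b)"
    by (simp add: walk_decoding_vertex)
  moreover have "b0 < tm i" if "2 * M * b0 + M \<le> b" for b0
  proof -
    from t(2) 1 have "b < 2 * M * tm i + M" by (simp add: gadget_time_def)
    with that have "2 * M * b0 < 2 * M * tm i" by linarith
    then show ?thesis by simp
  qed
  ultimately show ?thesis using 1 by (auto simp: walk_decoding_gadget)
next
  case (2 i)
  with dec t(2) show ?thesis by (auto simp: walk_decoding_gadget gadget_time_def)
next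
  case (3 i)
  with dec t(2) have "src i = u \<or> (\<exists>b0. strict_walk E lam u (src i) b0 \<and> b0 < tm i)"
    by (auto simp: walk_decoding_gadget gadget_time_def)
  with contact_of_index[OF \<open>i < M\<close>] have "strict_walk E lam u (dst i) (tm i)"
    by (auto intro: walk_edge walk_step)
  with 3 src_dst show ?thesis by (auto simp: walk_decoding_vertex gadget_time_def)
next
  case (4 i)
  then show ?thesis by (simp add: walk_decoding_gadget)
qed

lemma strict_walk_decode:
  "strict_walk EH lamH x y b \<Longrightarrow> u \<in> V \<Longrightarrow> x = \<sigma> u \<Longrightarrow> walk_decoding u y b"
  by (induction rule: strict_walk.induct) (auto intro: walk_decoding_start walk_decoding_step)

lemma reach_arc_encode_iff:
  assumes "u \<in> V" "v \<in> V"
  shows "reach_arc V E lam u v \<longleftrightarrow> reach_arc VH EH lamH (\<sigma> u) (\<sigma> v)"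
proof -
  have "\<sigma> u \<in> VH" "\<sigma> v \<in> VH" using assms \<sigma>_less by (auto simp: VH_def intro: trans_less_add1)
  moreover have "(\<exists>b. strict_walk E lam u v b) \<longleftrightarrow> (\<exists>b. strict_walk EH lamH (\<sigma> u) (\<sigma> v) b)"
    if "u \<noteq> v"
    using strict_walk_encode strict_walk_decode[OF _ assms(1) refl] walk_decoding_vertex[OF assms(2)] that
    by metis
  ultimately show ?thesis using assms \<sigma>_eq_iff by (auto simp: reach_arc_iff_strict_walk)
qed

end

theorem mainTheorem11:
  fixes V :: "'a set" and E :: "'a set set" and lam :: "'a set \<Rightarrow> nat set"
  assumes "temporal_graph V E lam"
    and "finite (contacts E lam)"
  shows "\<exists>(VH :: nat set) EH lamH (\<sigma> :: 'a \<Rightarrow> nat).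
           temporal_graph VH EH lamH \<and> happy EH lamH
         \<and> card VH = card V + 2 * card (contacts E lam)
         \<and> card EH = 4 * card (contacts E lam)
         \<and> inj_on \<sigma> V \<and> \<sigma> ` V \<subseteq> VH
         \<and> (\<forall>u\<in>V. \<forall>v\<in>V. reach_arc V E lam u v \<longleftrightarrow> reach_arc VH EH lamH (\<sigma> u) (\<sigma> v))"
proof -
  from assms(1) have "finite V" by (simp add: temporal_graph_def)
  then obtain \<sigma> :: "'a \<Rightarrow> nat" where \<sigma>: "bij_betw \<sigma> V {0..<card V}"
    using ex_bij_betw_finite_nat by blast
  obtain g where "bij_betw g {0..<card (directed_contacts E lam)} (directed_contacts E lam)"
    using ex_bij_betw_nat_finite card_directed_contacts(1)[OF assms] by blast
  with assms(1) \<sigma> interpret H: happy_encoding V E lam \<sigma> g "card V" "card (directed_contacts E lam)"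
    by unfold_locales
  have "\<sigma> ` V \<subseteq> H.VH" using \<sigma> by (auto simp: H.VH_def bij_betw_def)
  with \<sigma> show ?thesis
    using H.temporal_graph_H H.happy_H H.card_VH H.card_EH H.reach_arc_encode_iff
      card_directed_contacts(2)[OF assms]
    by (intro exI[of _ H.VH] exI[of _ H.EH] exI[of _ H.lamH] exI[of _ \<sigma>]) (auto simp: bij_betw_def)
qed

end
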